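(* Let $U\subset\mathbb{R}^u\times\mathbb{R}^s$ be a convex neighborhood of zero and let $f:U\to\mathbb{R}^u\times\mathbb{R}^s$ be a $C^1$ map with $f(0)=0$. Suppose that for $M>0$, $m\left(\left[\frac{\partial f_{\mathrm x}}{\partial\mathrm x}(U)\right]\right)-\frac1M\sup_{z\in U}\left\|\frac{\partial f_{\mathrm x}}{\partial\mathrm y}(z)\right\|\ge\xi$, $\sup_{z\in U}\left\{\left\|\frac{\partial f_{\mathrm y}}{\partial\mathrm y}(z)\right\|+M\left\|\frac{\partial f_{\mathrm y}}{\partial\mathrm x}(z)\right\|\right\}\le\mu$, and $\xi/\mu>1$. Let $J_s(0,M)=\{(\mathrm x,\mathrm y):\|\mathrm x\|\le M\|\mathrm y\|\}$ and $J^c_s(0,M)=(\mathbb{R}^u\times\mathbb{R}^s)\setminus J_s(0,M)$. Then $f\left(\overline{J^c_s(0,M)}\cap U\right)\subset J^c_s(0,M)\cup\{0\}$.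
   Context: Points of $\mathbb{R}^u\times\mathbb{R}^s$ are written $(\mathrm x,\mathrm y)$, $f=(f_{\mathrm x},f_{\mathrm y})$, norms Euclidean. For a linear map $A$, $m(A)=\max\{c:\|Av\|\ge c\|v\|\ \forall v\}$; for a set $\mathbf A$ of matrices, $m(\mathbf A)=\inf_{A\in\mathbf A}m(A)$. $[\partial f_{\mathrm x}/\partial\mathrm x(U)]$ is the set of matrices whose $(i,j)$ entry lies in $[\inf_{U}\partial f_{\mathrm x,i}/\partial\mathrm x_j,\sup_U\partial f_{\mathrm x,i}/\partial\mathrm x_j]$. $\overline{A}$ denotes closure. *)

theory Defs
  imports "HOL-Analysis.Analysis"
begin

definition min_norm :: "real^'n^'n \<Rightarrow> real" where
  "min_norm A = Sup {c. \<forall>v. norm (A *v v) \<ge> c * norm v}"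

definition min_norm_set :: "(real^'n^'n) set \<Rightarrow> real" where
  "min_norm_set S = Inf (min_norm ` S)"

text \<open>Interval matrix: entry (i,j) lies in [inf_U g i j, sup_U g i j], where the
  infimum/supremum are taken in the extended reals (a real a lies above the inf
  iff it lies above every lower bound of the value set, etc.).\<close>
definition interval_matrix :: "'z set \<Rightarrow> ('z \<Rightarrow> real^'n^'n) \<Rightarrow> (real^'n^'n) set" where
  "interval_matrix U g = {A. \<forall>i j.
      (\<forall>b. (\<forall>z\<in>U. b \<le> g z $ i $ j) \<longrightarrow> b \<le> A $ i $ j) \<and>
      (\<forall>b. (\<forall>z\<in>U. g z $ i $ j \<le> b) \<longrightarrow> A $ i $ j \<le> b)}"

definition dxx :: "(((real^'u) \<times> (real^'s)) \<Rightarrow>\<^sub>L ((real^'u) \<times> (real^'s))) \<Rightarrow> real^'u \<Rightarrow> real^'u" where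
  "dxx D v = fst (blinfun_apply D (v, 0))"
definition dxy :: "(((real^'u) \<times> (real^'s)) \<Rightarrow>\<^sub>L ((real^'u) \<times> (real^'s))) \<Rightarrow> real^'s \<Rightarrow> real^'u" where
  "dxy D w = fst (blinfun_apply D (0, w))"
definition dyx :: "(((real^'u) \<times> (real^'s)) \<Rightarrow>\<^sub>L ((real^'u) \<times> (real^'s))) \<Rightarrow> real^'u \<Rightarrow> real^'s" where
  "dyx D v = snd (blinfun_apply D (v, 0))"
definition dyy :: "(((real^'u) \<times> (real^'s)) \<Rightarrow>\<^sub>L ((real^'u) \<times> (real^'s))) \<Rightarrow> real^'s \<Rightarrow> real^'s" where
  "dyy D w = snd (blinfun_apply D (0, w))"

definition Js :: "real \<Rightarrow> ((real^'u) \<times> (real^'s)) set" where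
  "Js M = {(x, y). norm x \<le> M * norm y}"

end

theory Submission
  imports Defs
begin

text \<open>Write \<open>z = (x, y)\<close> with \<open>\<parallel>x\<parallel> \<ge> M \<parallel>y\<parallel>\<close>. Integrating the derivative along the
  segment from \<open>0\<close> to \<open>z\<close> gives \<open>f\<^sub>x(z) = A x + b\<close>, where \<open>A = \<integral>\<^sub>0\<^sup>1 \<partial>f\<^sub>x/\<partial>x(t z) dt\<close> lies
  in the interval matrix (its entries are averages of the entries of \<open>\<partial>f\<^sub>x/\<partial>x\<close> over \<open>U\<close>)
  and \<open>\<parallel>b\<parallel> \<le> sup \<parallel>\<partial>f\<^sub>x/\<partial>y\<parallel> \<parallel>y\<parallel>\<close>. Hence \<open>\<parallel>f\<^sub>x(z)\<parallel> \<ge> m \<parallel>x\<parallel> - sup \<parallel>\<partial>f\<^sub>x/\<partial>y\<parallel> \<parallel>x\<parallel>/M \<ge> \<xi> \<parallel>x\<parallel>\<close>,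
  while in the same way \<open>M \<parallel>f\<^sub>y(z)\<parallel> \<le> \<mu> \<parallel>x\<parallel>\<close>. As \<open>\<xi> > \<mu>\<close>, \<open>f(z)\<close> lies strictly outside the
  cone \<open>J\<^sub>s(0,M)\<close> unless \<open>x = 0\<close>, which forces \<open>z = 0\<close>.\<close>

lemma min_norm_le: "min_norm A * norm v \<le> norm (A *v v)"
proof (cases "v = 0")
  case False
  have "min_norm A \<le> norm (A *v v) / norm v"
    unfolding min_norm_def
  proof (rule cSup_least)
    have "0 \<in> {c. \<forall>v. c * norm v \<le> norm (A *v v)}" by simp
    then show "{c. \<forall>v. c * norm v \<le> norm (A *v v)} \<noteq> {}" by blast
  next
    fix c assume "c \<in> {c. \<forall>v. c * norm v \<le> norm (A *v v)}"
    then show "c \<le> norm (A *v v) / norm v" using False by (simp add: field_simps)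
  qed
  then show ?thesis using False by (simp add: field_simps)
qed simp

lemma min_norm_nonneg: "0 \<le> min_norm (A :: real^'n^'n)"
proof -
  let ?v = "axis undefined 1 :: real^'n"
  have "bdd_above {c. \<forall>v. c * norm v \<le> norm (A *v v)}"
  proof (rule bdd_aboveI)
    fix c assume "c \<in> {c. \<forall>v. c * norm v \<le> norm (A *v v)}"
    then have "c * norm ?v \<le> norm (A *v ?v)" by blast
    then show "c \<le> norm (A *v ?v)" by simp
  qed
  then show ?thesis unfolding min_norm_def by (rule cSup_upper[rotated]) simp
qed

lemma min_norm_set_le: "A \<in> S \<Longrightarrow> min_norm_set S \<le> min_norm A"
  unfolding min_norm_set_def
  by (rule cInf_lower[OF imageI]) (auto intro: bdd_belowI[where m = 0] simp: min_norm_nonneg)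

lemma has_integral_in_interval_matrix:
  fixes h :: "real \<Rightarrow> real^'n^'n"
  assumes int: "(h has_integral A) {0..1}" and range: "\<And>t. t \<in> {0..1} \<Longrightarrow> h t \<in> g ` U"
  shows "A \<in> interval_matrix U g"
  unfolding interval_matrix_def
proof (intro CollectI allI conjI impI)
  fix i j
  have entry: "((\<lambda>t. h t $ i $ j) has_integral A $ i $ j) {0..1}"
    using has_integral_linear[OF int bounded_linear_compose[OF
          bounded_linear_vec_nth[of j] bounded_linear_vec_nth[of i]]]
    by (simp add: o_def)
  {
    fix c assume "\<forall>z\<in>U. c \<le> g z $ i $ j"
    then have "c \<le> h t $ i $ j" if "t \<in> {0..1}" for t
      using range[OF that] by force
    then show "c \<le> A $ i $ j"
      by (rule has_integral_le[OF has_integral_const_real[of c 0 1, simplified] entry])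
  next
    fix c assume "\<forall>z\<in>U. g z $ i $ j \<le> c"
    then have "h t $ i $ j \<le> c" if "t \<in> {0..1}" for t
      using range[OF that] by force
    then show "A $ i $ j \<le> c"
      by (rule has_integral_le[OF entry has_integral_const_real[of c 0 1, simplified]])
  }
qed

lemma has_integral_matrix_vector_mult:
  fixes h :: "'a::euclidean_space \<Rightarrow> real^'n^'m" and v :: "real^'n"
  assumes "(h has_integral A) S"
  shows "((\<lambda>t. h t *v v) has_integral A *v v) S"
proof -
  have "linear (\<lambda>B::real^'n^'m. B *v v)"
    by (rule linearI) (simp add: matrix_vector_mult_add_rdistrib,
        simp add: matrix_vector_mult_def vec_eq_iff sum_distrib_left mult.assoc)
  then show ?thesis
    using has_integral_linear[OF assms] by (simp add: linear_conv_bounded_linear o_def)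
qed

lemma norm_has_integral_unit_interval_le:
  fixes g :: "real \<Rightarrow> 'a::real_normed_vector"
  assumes "(g has_integral I) {0..1}" and "\<And>t. t \<in> {0..1} \<Longrightarrow> norm (g t) \<le> B"
  shows "norm I \<le> B"
proof -
  have "norm (g 0) \<le> B" using assms(2)[of 0] by simp
  then have "0 \<le> B" by (rule order_trans[OF norm_ge_zero])
  then have "norm I \<le> B * Henstock_Kurzweil_Integration.content (cbox (0::real) 1)"
    by (rule has_integral_bound) (use assms in auto)
  then show ?thesis by simp
qed

lemma has_integral_derivative_along_segment:
  fixes f :: "'a::real_normed_vector \<Rightarrow> 'b::banach"
  assumes seg: "closed_segment 0 z \<subseteq> U"
    and deriv: "\<And>p. p \<in> U \<Longrightarrow> (f has_derivative f' p) (at p within U)"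
  shows "((\<lambda>t. f' (t *\<^sub>R z) z) has_integral f z - f 0) {0..1}"
proof -
  have on_seg: "t *\<^sub>R z \<in> U" if "t \<in> {0..1}" for t
    using seg that by (auto simp: closed_segment_def)
  have "((\<lambda>t. f (t *\<^sub>R z)) has_vector_derivative f' (t *\<^sub>R z) z) (at t within {0..1})"
    if t: "t \<in> {0..1}" for t
  proof -
    have "((\<lambda>t. t *\<^sub>R z) has_derivative (\<lambda>s. s *\<^sub>R z)) (at t within {0..1})"
      by (intro derivative_eq_intros) auto
    moreover have "(f has_derivative f' (t *\<^sub>R z)) (at (t *\<^sub>R z) within (\<lambda>t. t *\<^sub>R z) ` {0..1})"
      using deriv[OF on_seg[OF t]] by (rule has_derivative_subset) (use on_seg in fastforce)
    ultimately have "((\<lambda>t. f (t *\<^sub>R z)) has_derivative (\<lambda>s. f' (t *\<^sub>R z) (s *\<^sub>R z))) (at t within {0..1})"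
      using diff_chain_within by (fastforce simp: o_def)
    then show ?thesis
      using linear_cmul[OF has_derivative_linear[OF deriv[OF on_seg[OF t]]]]
      by (simp add: has_vector_derivative_def)
  qed
  then have "((\<lambda>t. f' (t *\<^sub>R z) z) has_integral f (1 *\<^sub>R z) - f (0 *\<^sub>R z)) {0..1}"
    by (intro fundamental_theorem_of_calculus) auto
  then show ?thesis by simp
qed

lemma blinfun_apply_blocks:
  "blinfun_apply D (x, y) = (dxx D x + dxy D y, dyx D x + dyy D y)"
  using blinfun.add_right[of D "(x, 0)" "(0, y)"]
  by (simp add: dxx_def dxy_def dyx_def dyy_def prod_eq_iff)

lemma bounded_linear_blocks:
  "bounded_linear (dxx D)" "bounded_linear (dxy D)" "bounded_linear (dyx D)" "bounded_linear (dyy D)"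
  unfolding dxx_def[abs_def] dxy_def[abs_def] dyx_def[abs_def] dyy_def[abs_def]
  by (auto intro!: bounded_linear_intros)

lemma continuous_on_matrix_dxx:
  assumes "continuous_on S G"
  shows "continuous_on S (\<lambda>t. matrix (dxx (G t)))"
proof -
  have "matrix (dxx (G t)) = (\<chi> i j. fst (blinfun_apply (G t) (axis j 1, 0)) $ i)" for t
    unfolding matrix_def dxx_def by simp
  then show ?thesis
    using assms by (simp, intro continuous_on_vec_lambda continuous_intros)
qed

lemma closure_compl_Js_subset: "closure (- Js M) \<subseteq> {(x, y). M * norm y \<le> norm x}"
proof (rule closure_minimal)
  show "closed {(x, y). M * norm y \<le> norm x}"
    unfolding case_prod_beta by (intro closed_Collect_le continuous_intros)
qed (auto simp: Js_def)

lemma norm_fst_ge: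
  fixes f :: "(real^'u) \<times> (real^'s) \<Rightarrow> (real^'u) \<times> (real^'s)"
    and f' :: "(real^'u) \<times> (real^'s) \<Rightarrow> ((real^'u) \<times> (real^'s)) \<Rightarrow>\<^sub>L ((real^'u) \<times> (real^'s))"
  assumes seg: "closed_segment 0 (x, y) \<subseteq> U"
    and deriv: "\<And>p. p \<in> U \<Longrightarrow> (f has_derivative blinfun_apply (f' p)) (at p within U)"
    and cont: "continuous_on U f'" and "f 0 = 0"
    and dxy_le: "\<And>p. p \<in> U \<Longrightarrow> onorm (dxy (f' p)) \<le> C"
  shows "min_norm_set (interval_matrix U (\<lambda>p. matrix (dxx (f' p)))) * norm x - C * norm y
    \<le> norm (fst (f (x, y)))"
proof -
  define G where "G t = f' (t *\<^sub>R (x, y))" for t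
  have on_seg: "t *\<^sub>R (x, y) \<in> U" if "t \<in> {0..1}" for t
    using seg that by (auto simp: closed_segment_def)
  have "((\<lambda>t. blinfun_apply (G t) (x, y)) has_integral f (x, y)) {0..1}"
    using has_integral_derivative_along_segment[OF seg deriv] \<open>f 0 = 0\<close> by (simp add: G_def)
  from has_integral_linear[OF this bounded_linear_fst]
  have int_fst: "((\<lambda>t. dxx (G t) x + dxy (G t) y) has_integral fst (f (x, y))) {0..1}"
    by (simp add: o_def blinfun_apply_blocks)
  have cont_G: "continuous_on {0..1} G"
    unfolding G_def using on_seg
    by (intro continuous_on_compose2[OF cont] continuous_intros) auto
  obtain A where int_A: "((\<lambda>t. matrix (dxx (G t))) has_integral A) {0..1}"
    using integrable_continuous_real[OF continuous_on_matrix_dxx[OF cont_G]]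
    by (auto simp: integrable_on_def)
  have "((\<lambda>t. dxx (G t) x) has_integral A *v x) {0..1}"
    using has_integral_matrix_vector_mult[OF int_A, of x]
    by (simp add: matrix_works bounded_linear.linear[OF bounded_linear_blocks(1)])
  from has_integral_diff[OF int_fst this]
  have int_rest: "((\<lambda>t. dxy (G t) y) has_integral fst (f (x, y)) - A *v x) {0..1}" by simp
  have "A \<in> interval_matrix U (\<lambda>p. matrix (dxx (f' p)))"
    by (rule has_integral_in_interval_matrix[OF int_A]) (unfold G_def, use on_seg in blast)
  then have "min_norm_set (interval_matrix U (\<lambda>p. matrix (dxx (f' p)))) * norm x \<le> norm (A *v x)"
    by (meson min_norm_set_le min_norm_le mult_right_mono norm_ge_zero order_trans)
  moreover have "norm (fst (f (x, y)) - A *v x) \<le> C * norm y"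
  proof (rule norm_has_integral_unit_interval_le[OF int_rest])
    fix t :: real assume "t \<in> {0..1}"
    have "norm (dxy (G t) y) \<le> onorm (dxy (G t)) * norm y"
      by (rule onorm[OF bounded_linear_blocks(2)])
    also have "\<dots> \<le> C * norm y"
      using dxy_le[OF on_seg[OF \<open>t \<in> {0..1}\<close>]] by (simp add: G_def mult_right_mono)
    finally show "norm (dxy (G t) y) \<le> C * norm y" .
  qed
  moreover have "norm (A *v x) \<le> norm (fst (f (x, y))) + norm (fst (f (x, y)) - A *v x)"
    by (metis norm_minus_commute norm_triangle_sub)
  ultimately show ?thesis by linarith
qed

lemma norm_fst_ge_in_cone:
  fixes f :: "(real^'u) \<times> (real^'s) \<Rightarrow> (real^'u) \<times> (real^'s)"
    and f' :: "(real^'u) \<times> (real^'s) \<Rightarrow> ((real^'u) \<times> (real^'s)) \<Rightarrow>\<^sub>L ((real^'u) \<times> (real^'s))"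
  assumes seg: "closed_segment 0 (x, y) \<subseteq> U"
    and deriv: "\<And>p. p \<in> U \<Longrightarrow> (f has_derivative blinfun_apply (f' p)) (at p within U)"
    and "continuous_on U f'" and "f 0 = 0" and "M > 0" and cone: "M * norm y \<le> norm x"
    and expansion: "\<And>p. p \<in> U \<Longrightarrow>
      min_norm_set (interval_matrix U (\<lambda>p. matrix (dxx (f' p)))) - (1 / M) * onorm (dxy (f' p)) \<ge> \<xi>"
  shows "\<xi> * norm x \<le> norm (fst (f (x, y)))"
proof -
  define m where "m = min_norm_set (interval_matrix U (\<lambda>p. matrix (dxx (f' p))))"
  have dxy_le: "onorm (dxy (f' p)) \<le> M * (m - \<xi>)" if "p \<in> U" for p
    using expansion[OF that] \<open>M > 0\<close> by (simp add: m_def field_simps)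
  have "0 \<in> U" using seg by auto
  have "0 \<le> M * (m - \<xi>)"
    using dxy_le[OF \<open>0 \<in> U\<close>] onorm_pos_le[OF bounded_linear_blocks(2)] by (rule order_trans[rotated])
  then have "0 \<le> m - \<xi>" using \<open>M > 0\<close> by (simp add: zero_le_mult_iff)
  have "m * norm x - M * (m - \<xi>) * norm y \<le> norm (fst (f (x, y)))"
    unfolding m_def using norm_fst_ge[OF seg deriv assms(3,4) dxy_le[unfolded m_def]] .
  moreover have "M * (m - \<xi>) * norm y \<le> (m - \<xi>) * norm x"
    using mult_left_mono[OF cone \<open>0 \<le> m - \<xi>\<close>] by (simp add: ac_simps)
  ultimately show ?thesis by (simp add: algebra_simps)
qed

lemma norm_snd_le_in_cone:
  fixes f :: "(real^'u) \<times> (real^'s) \<Rightarrow> (real^'u) \<times> (real^'s)"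
    and f' :: "(real^'u) \<times> (real^'s) \<Rightarrow> ((real^'u) \<times> (real^'s)) \<Rightarrow>\<^sub>L ((real^'u) \<times> (real^'s))"
  assumes seg: "closed_segment 0 (x, y) \<subseteq> U"
    and deriv: "\<And>p. p \<in> U \<Longrightarrow> (f has_derivative blinfun_apply (f' p)) (at p within U)"
    and "f 0 = 0" and "M > 0" and cone: "M * norm y \<le> norm x"
    and contraction: "\<And>p. p \<in> U \<Longrightarrow> onorm (dyy (f' p)) + M * onorm (dyx (f' p)) \<le> \<mu>"
  shows "M * norm (snd (f (x, y))) \<le> \<mu> * norm x"
proof -
  have "((\<lambda>t. snd (blinfun_apply (f' (t *\<^sub>R (x, y))) (x, y))) has_integral snd (f (x, y))) {0..1}"
    using has_integral_linear[OF has_integral_derivative_along_segment[OF seg deriv] bounded_linear_snd]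
      \<open>f 0 = 0\<close> by (simp add: o_def)
  then have "norm (snd (f (x, y))) \<le> \<mu> * norm x / M"
  proof (rule norm_has_integral_unit_interval_le)
    fix t :: real assume "t \<in> {0..1}"
    then have "t *\<^sub>R (x, y) \<in> U" using seg by (auto simp: closed_segment_def)
    define D where "D = f' (t *\<^sub>R (x, y))"
    have "norm (snd (blinfun_apply D (x, y))) \<le> norm (dyx D x) + norm (dyy D y)"
      by (simp add: blinfun_apply_blocks norm_triangle_ineq)
    also have "\<dots> \<le> onorm (dyx D) * norm x + onorm (dyy D) * norm y"
      by (intro add_mono onorm bounded_linear_blocks)
    also have "\<dots> \<le> onorm (dyx D) * norm x + onorm (dyy D) * (norm x / M)"
      using cone \<open>M > 0\<close> onorm_pos_le[OF bounded_linear_blocks(4)]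
      by (intro add_left_mono mult_left_mono) (simp_all add: field_simps)
    also have "\<dots> = (onorm (dyy D) + M * onorm (dyx D)) * norm x / M"
      using \<open>M > 0\<close> by (simp add: field_simps)
    also have "\<dots> \<le> \<mu> * norm x / M"
      using contraction[OF \<open>t *\<^sub>R (x, y) \<in> U\<close>] \<open>M > 0\<close> unfolding D_def
      by (intro divide_right_mono mult_right_mono) auto
    finally show "norm (snd (blinfun_apply (f' (t *\<^sub>R (x, y))) (x, y))) \<le> \<mu> * norm x / M"
      by (simp add: D_def)
  qed
  then show ?thesis using \<open>M > 0\<close> by (simp add: field_simps)
qed

theorem theorem4p3:
  fixes U :: "((real^'u) \<times> (real^'s)) set"
    and f :: "(real^'u) \<times> (real^'s) \<Rightarrow> (real^'u) \<times> (real^'s)"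
    and f' :: "(real^'u) \<times> (real^'s) \<Rightarrow> (((real^'u) \<times> (real^'s)) \<Rightarrow>\<^sub>L ((real^'u) \<times> (real^'s)))"
    and M \<xi> \<mu> :: real
  assumes "convex U" and "0 \<in> interior U"
    and "\<And>z. z \<in> U \<Longrightarrow> (f has_derivative blinfun_apply (f' z)) (at z within U)"
    and "continuous_on U f'"
    and "f 0 = 0"
    and "M > 0"
    and "\<And>z. z \<in> U \<Longrightarrow>
      min_norm_set (interval_matrix U (\<lambda>z. matrix (dxx (f' z))))
        - (1 / M) * onorm (dxy (f' z)) \<ge> \<xi>"
    and "\<And>z. z \<in> U \<Longrightarrow> onorm (dyy (f' z)) + M * onorm (dyx (f' z)) \<le> \<mu>"
    and "\<xi> / \<mu> > 1"
  shows "f ` (closure (- Js M) \<inter> U) \<subseteq> (- Js M) \<union> {0}"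
proof
  fix w assume "w \<in> f ` (closure (- Js M) \<inter> U)"
  then obtain x y where "(x, y) \<in> closure (- Js M)" and xy_U: "(x, y) \<in> U" and w: "w = f (x, y)"
    by auto
  then have cone: "M * norm y \<le> norm x" using closure_compl_Js_subset by blast
  have "0 \<in> U" using assms(2) interior_subset by blast
  have seg: "closed_segment 0 (x, y) \<subseteq> U"
    using closed_segment_subset[OF \<open>0 \<in> U\<close> xy_U \<open>convex U\<close>] .
  have "0 \<le> onorm (dyy (f' 0)) + M * onorm (dyx (f' 0))"
    using \<open>M > 0\<close> by (intro add_nonneg_nonneg mult_nonneg_nonneg onorm_pos_le bounded_linear_blocks) auto
  with assms(8)[OF \<open>0 \<in> U\<close>] assms(9) have "0 < \<mu>" by (cases "\<mu> = 0") auto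
  with assms(9) have "\<mu> < \<xi>" by (simp add: field_simps)
  show "w \<in> - Js M \<union> {0}"
  proof (cases "x = 0")
    case True
    with cone \<open>M > 0\<close> have "y = 0" by (simp add: mult_le_0_iff)
    with True w \<open>f 0 = 0\<close> show ?thesis by (simp add: zero_prod_def)
  next
    case False
    have "M * norm (snd w) \<le> \<mu> * norm x"
      unfolding w by (rule norm_snd_le_in_cone[OF seg assms(3,5,6) cone assms(8)])
    also have "\<dots> < \<xi> * norm x" using \<open>\<mu> < \<xi>\<close> False by simp
    also have "\<dots> \<le> norm (fst w)"
      unfolding w by (rule norm_fst_ge_in_cone[OF seg assms(3-6) cone assms(7)])
    finally show ?thesis by (auto simp: Js_def case_prod_beta)
  qed
qed

end
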